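(* Let $p\in(0,1)$ and let $\theta\ge 2$ be an integer. There exists a constant $C_p>0$ such that, with high probability over the choice of $G_n\sim\mathcal{G}(n,\theta+1)$, the discrete-time threshold-$\theta$ contact process with parameter $p$ on $G_n$ started from the all-infected state $X_0\equiv\mathbf{1}$ satisfies, with high probability, $X_t=\mathbf{0}$ for all $t\ge n^{C_p}$.
   Context: $\mathcal{G}(n,d)$ denotes the random $d$-regular multigraph given by the configuration model: each of the $n$ vertices receives $d$ half-edges (with $dn$ even) and all half-edges are paired by a uniformly random perfect matching, each pair forming an edge (loops and multiple edges allowed). The number of neighbors of $v$ in a set $W$ means the number of half-edges at $v$ whose partner is attached to a vertex of $W$. Discrete-time threshold-$\theta$ contact process with parameter $p$ on $G=(V,E)$: state $X_t\in\{0,1\}^V$ (1 = infected); given $X_t$, independently for all $v$, if $v$ has at least $\theta$ infected neighbors then $X_{t+1}(v)=1$ with probability $p$ and $0$ otherwise; if $v$ has fewer than $\theta$ infected neighbors then $X_{t+1}(v)=0$. "With high probability" means with probability tending to $1$ as $n\to\infty$. *)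

theory Defs
  imports "HOL-Probability.Probability"
begin

text \<open>Vertices are 0..n-1, half-edges are 0..d*n-1, and
  half-edge h is attached to vertex h div d. A configuration is a perfect matching of the
  half-edges, encoded as a fixed-point-free involution on {..<d*n} (identity outside).\<close>

definition matchings :: "nat \<Rightarrow> nat \<Rightarrow> (nat \<Rightarrow> nat) set" where
  "matchings n d = {m. (\<forall>h < d*n. m h < d*n \<and> m h \<noteq> h \<and> m (m h) = h) \<and> (\<forall>h. d*n \<le> h \<longrightarrow> m h = h)}"

definition config_model :: "nat \<Rightarrow> nat \<Rightarrow> (nat \<Rightarrow> nat) pmf" where
  "config_model n d = pmf_of_set (matchings n d)"

definition nbrs_in :: "nat \<Rightarrow> nat \<Rightarrow> (nat \<Rightarrow> nat) \<Rightarrow> (nat \<Rightarrow> bool) \<Rightarrow> nat \<Rightarrow> nat" where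
  "nbrs_in n d m W v = card {h. h < d*n \<and> h div d = v \<and> W (m h div d)}"

text \<open>States: functions nat => bool (True = infected), False outside {..<n}.
  One step of the discrete-time threshold-theta contact process with parameter p.\<close>
definition cp_step :: "nat \<Rightarrow> nat \<Rightarrow> (nat \<Rightarrow> nat) \<Rightarrow> nat \<Rightarrow> real \<Rightarrow> (nat \<Rightarrow> bool) \<Rightarrow> (nat \<Rightarrow> bool) pmf" where
  "cp_step n d m \<theta> p X = Pi_pmf {..<n} False
     (\<lambda>v. if \<theta> \<le> nbrs_in n d m X v then bernoulli_pmf p else return_pmf False)"

fun cp_traj :: "nat \<Rightarrow> nat \<Rightarrow> (nat \<Rightarrow> nat) \<Rightarrow> nat \<Rightarrow> real \<Rightarrow> (nat \<Rightarrow> bool) \<Rightarrow> nat \<Rightarrow> (nat \<Rightarrow> bool) list pmf" where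
  "cp_traj n d m \<theta> p X0 0 = return_pmf [X0]"
| "cp_traj n d m \<theta> p X0 (Suc k) =
     cp_traj n d m \<theta> p X0 k \<bind> (\<lambda>xs. map_pmf (\<lambda>y. xs @ [y]) (cp_step n d m \<theta> p (last xs)))"

definition all_infected :: "nat \<Rightarrow> nat \<Rightarrow> bool" where
  "all_infected n = (\<lambda>v. v < n)"

definition healthy :: "nat \<Rightarrow> bool" where
  "healthy = (\<lambda>v. False)"

text \<open>The probability of the infinite-horizon event "X_t \<noteq> 0 for some t \<ge> n^C"
  is the supremum over k of these quantities (continuity of measure).\<close>
definition survive_prob :: "nat \<Rightarrow> nat \<Rightarrow> (nat \<Rightarrow> nat) \<Rightarrow> nat \<Rightarrow> real \<Rightarrow> real \<Rightarrow> nat \<Rightarrow> real" where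
  "survive_prob n d m \<theta> p C k =
     measure_pmf.prob (cp_traj n d m \<theta> p (all_infected n) k)
       {xs. \<exists>t \<le> k. real n powr C \<le> real t \<and> xs ! t \<noteq> healthy}"

end

theory Submission
  imports Defs "HOL-Real_Asymp.Real_Asymp"
begin

text \<open>Call a vertex set absorbing if each of its vertices has at least two neighbours inside it.
  In a \<open>(\<theta>+1)\<close>-regular graph a healthy absorbing set can never see \<open>\<theta>\<close> infected neighbours, so
  it stays healthy forever; hence the largest healthy absorbing set \<open>A\<^sub>t\<close> only grows.
  While \<open>A\<^sub>t\<close> is not everything, the graph (of degree at least 3) contains a set \<open>S\<close> of
  \<open>O(log n)\<close> vertices outside \<open>A\<^sub>t\<close> each having two neighbours in \<open>A\<^sub>t \<union> S\<close>: a short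
  non-backtracking walk that returns to \<open>A\<^sub>t\<close>, closes a cycle, or collides with another one
  (such walks branch at every step, so there are too many to stay disjoint for \<open>log n\<close> steps).
  With probability \<open>(1-p)\<^bsup>|S|\<^esup> = n\<^bsup>-O(1)\<^esup>\<close> all of \<open>S\<close> heals at once, and then \<open>A\<^sub>t \<union> S\<close> is
  absorbing. So the potential \<open>2\<^bsup>n-|A\<^sub>t|\<^esup>\<close> (and \<open>0\<close> after extinction) contracts in expectation
  by a factor \<open>1 - n\<^bsup>-O(1)\<^esup>\<close> per step, and after \<open>n\<^bsup>C\<^esup>\<close> steps it is below \<open>2\<^sup>n exp(-c n\<^sup>2)\<close>.
  This holds for every graph.\<close>

section \<open>Configuration multigraphs\<close>

lemma div_eq_iff_mult_le_less: "0 < (d::nat) \<Longrightarrow> h div d = v \<longleftrightarrow> v * d \<le> h \<and> h < (v+1) * d"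
  by (metis div_less_iff_less_mult le_antisym less_add_one
    less_eq_div_iff_mult_less_eq less_inc_imp_less_eq)

locale config_graph =
  fixes n d :: nat and m :: "nat \<Rightarrow> nat"
  assumes matching: "m \<in> matchings n d"
begin

lemma partner_less: "h < d*n \<Longrightarrow> m h < d*n"
  and partner_neq: "h < d*n \<Longrightarrow> m h \<noteq> h"
  and partner_partner: "h < d*n \<Longrightarrow> m (m h) = h"
  using matching by (auto simp: matchings_def)

lemma partner_inj: "h1 < d*n \<Longrightarrow> h2 < d*n \<Longrightarrow> m h1 = m h2 \<Longrightarrow> h1 = h2"
  by (metis partner_partner)

lemma vertex_less: "h < d*n \<Longrightarrow> h div d < n"
  by (metis less_mult_imp_div_less mult.commute)

lemma partner_vertex_less: "h < d*n \<Longrightarrow> m h div d < n"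
  using vertex_less partner_less by blast

lemma half_edges_at: "v < n \<Longrightarrow> {h. h < d*n \<and> h div d = v} = {v * d..<(v+1) * d}"
proof (cases "d = 0")
  case False
  assume v: "v < n"
  have "(v+1) * d \<le> n * d" using v by (intro mult_le_mono1) simp
  then have "(v+1) * d \<le> d*n" by (simp add: mult.commute)
  moreover have iff: "h div d = v \<longleftrightarrow> v * d \<le> h \<and> h < (v+1) * d" for h
    using False by (intro div_eq_iff_mult_le_less) auto
  ultimately show ?thesis
    unfolding set_eq_iff mem_Collect_eq atLeastLessThan_iff iff by (meson order_less_le_trans)
qed simp

lemma card_half_edges_at: "v < n \<Longrightarrow> card {h. h < d*n \<and> h div d = v} = d"
  by (simp add: half_edges_at)

lemma finite_half_edges_at: "finite {h. h < d*n \<and> h div d = v \<and> P h}"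
  by (rule finite_subset[of _ "{..<d*n}"]) auto

lemma nbrs_in_mono: "(\<And>x. W x \<Longrightarrow> W' x) \<Longrightarrow> nbrs_in n d m W v \<le> nbrs_in n d m W' v"
  unfolding nbrs_in_def by (rule card_mono[OF finite_half_edges_at]) auto

lemma nbrs_in_add_compl: "v < n \<Longrightarrow> nbrs_in n d m W v + nbrs_in n d m (\<lambda>x. \<not> W x) v = d"
proof -
  assume v: "v < n"
  have "nbrs_in n d m W v + nbrs_in n d m (\<lambda>x. \<not> W x) v =
    card ({h. h < d*n \<and> h div d = v \<and> W (m h div d)} \<union> {h. h < d*n \<and> h div d = v \<and> \<not> W (m h div d)})"
    unfolding nbrs_in_def by (subst card_Un_disjoint) (auto intro: finite_half_edges_at)
  also have "\<dots> = card {h. h < d*n \<and> h div d = v}"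
    by (rule arg_cong[where f=card]) auto
  finally show ?thesis using card_half_edges_at v by simp
qed

lemma two_le_nbrs_in:
  assumes "h1 \<noteq> h2" "h1 < d*n" "h2 < d*n" "h1 div d = v" "h2 div d = v"
    "W (m h1 div d)" "W (m h2 div d)"
  shows "2 \<le> nbrs_in n d m W v"
proof -
  have "{h1, h2} \<subseteq> {h. h < d*n \<and> h div d = v \<and> W (m h div d)}" by (simp add: assms(2-7))
  from card_mono[OF finite_half_edges_at this] show ?thesis
    using assms(1) unfolding nbrs_in_def by simp
qed

lemma obtain_nbr_half_edge:
  assumes "1 \<le> nbrs_in n d m W v"
  obtains h where "h < d*n" "h div d = v" "W (m h div d)"
proof -
  have "{h. h < d*n \<and> h div d = v \<and> W (m h div d)} \<noteq> {}"
    using assms unfolding nbrs_in_def by (metis card.empty not_one_le_zero)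
  then show ?thesis using that by blast
qed

definition supported :: "nat set \<Rightarrow> nat set \<Rightarrow> bool" where
  "supported W S \<longleftrightarrow> (\<forall>v\<in>S. 2 \<le> nbrs_in n d m (\<lambda>x. x \<in> W) v)"

definition absorbing :: "nat set \<Rightarrow> bool" where
  "absorbing S \<longleftrightarrow> S \<subseteq> {..<n} \<and> supported S S"

lemma supported_mono:
  assumes "W \<subseteq> W'" "supported W S"
  shows "supported W' S"
  unfolding supported_def
proof
  fix v assume "v \<in> S"
  then have "2 \<le> nbrs_in n d m (\<lambda>x. x \<in> W) v" using assms(2) by (simp add: supported_def)
  also have "\<dots> \<le> nbrs_in n d m (\<lambda>x. x \<in> W') v" using assms(1) by (intro nbrs_in_mono) auto
  finally show "2 \<le> nbrs_in n d m (\<lambda>x. x \<in> W') v" .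
qed

lemma supported_Un: "supported W S \<Longrightarrow> supported W T \<Longrightarrow> supported W (S \<union> T)"
  by (auto simp: supported_def)

end

section \<open>Non-backtracking walks and short cycles\<close>

text \<open>A walk from \<open>u\<close> is the list of half-edges through which it leaves its successive
  vertices; it arrives through their partners.\<close>

locale complement_walks = config_graph +
  fixes H :: "nat set"
begin

definition U :: "nat set" where "U = {..<n} - H"

definition U_edge :: "nat \<Rightarrow> bool" where
  "U_edge e \<longleftrightarrow> e < d*n \<and> e div d \<in> U \<and> m e div d \<in> U"

definition nb_walk :: "nat \<Rightarrow> nat list \<Rightarrow> bool" where
  "nb_walk u es \<longleftrightarrow> (\<forall>e\<in>set es. U_edge e) \<and> (es \<noteq> [] \<longrightarrow> hd es div d = u) \<and>
     (\<forall>i. Suc i < length es \<longrightarrow> es!(Suc i) div d = m (es!i) div d \<and> es!(Suc i) \<noteq> m (es!i))"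

definition walk_end :: "nat \<Rightarrow> nat list \<Rightarrow> nat" where
  "walk_end u es = (if es = [] then u else m (last es) div d)"

definition walk_verts :: "nat \<Rightarrow> nat list \<Rightarrow> nat set" where
  "walk_verts u es = insert u ((\<lambda>e. m e div d) ` set es)"

lemma U_less: "v \<in> U \<Longrightarrow> v < n"
  by (simp add: U_def)

lemma card_U_le: "card U \<le> n"
  unfolding U_def by (metis card_Diff_subset_Int card_lessThan diff_le_self finite_Int finite_lessThan)

lemma U_edge_less: "U_edge e \<Longrightarrow> e < d*n"
  by (simp add: U_edge_def)

lemma finite_U_edges: "finite {f. U_edge f \<and> P f}"
  by (rule finite_subset[of _ "{..<d*n}"]) (auto simp: U_edge_def)

lemma nb_walk_U_edge: "nb_walk u es \<Longrightarrow> e \<in> set es \<Longrightarrow> U_edge e"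
  by (auto simp: nb_walk_def)

lemma nb_walk_Nil [simp]: "nb_walk u []"
  by (simp add: nb_walk_def)

lemma nb_walk_Cons:
  "nb_walk u (e#es) \<longleftrightarrow> U_edge e \<and> e div d = u \<and> nb_walk (m e div d) es \<and> (es \<noteq> [] \<longrightarrow> hd es \<noteq> m e)"
proof
  assume a: "nb_walk u (e#es)"
  have "\<forall>i. Suc i < length es \<longrightarrow> es!(Suc i) div d = m (es!i) div d \<and> es!(Suc i) \<noteq> m (es!i)"
  proof (intro allI impI)
    fix i assume "Suc i < length es"
    then show "es!(Suc i) div d = m (es!i) div d \<and> es!(Suc i) \<noteq> m (es!i)"
      using a unfolding nb_walk_def by (metis Suc_less_eq length_Cons nth_Cons_Suc)
  qed
  moreover have "es \<noteq> [] \<Longrightarrow> hd es div d = m e div d \<and> hd es \<noteq> m e"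
    using a unfolding nb_walk_def
    by (metis hd_conv_nth length_Cons length_greater_0_conv nth_Cons_0 nth_Cons_Suc Suc_less_eq)
  ultimately show "U_edge e \<and> e div d = u \<and> nb_walk (m e div d) es \<and> (es \<noteq> [] \<longrightarrow> hd es \<noteq> m e)"
    using a unfolding nb_walk_def by auto
next
  assume a: "U_edge e \<and> e div d = u \<and> nb_walk (m e div d) es \<and> (es \<noteq> [] \<longrightarrow> hd es \<noteq> m e)"
  have "(e#es)!(Suc i) div d = m ((e#es)!i) div d \<and> (e#es)!(Suc i) \<noteq> m ((e#es)!i)"
    if i: "Suc i < length (e#es)" for i
    using a i unfolding nb_walk_def by (cases i) (auto simp: hd_conv_nth)
  then show "nb_walk u (e#es)" using a unfolding nb_walk_def by auto
qed

lemma nb_walk_snoc: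
  "nb_walk u (es@[f]) \<longleftrightarrow> nb_walk u es \<and> U_edge f \<and> f div d = walk_end u es \<and> (es \<noteq> [] \<longrightarrow> f \<noteq> m (last es))"
proof (induction es arbitrary: u)
  case (Cons a es)
  show ?case by (auto simp: nb_walk_Cons Cons.IH walk_end_def hd_append)
qed (auto simp: nb_walk_Cons walk_end_def)

lemma walk_end_Cons: "walk_end u (e#es) = walk_end (m e div d) es"
  by (simp add: walk_end_def)

lemma walk_verts_snoc: "walk_verts u (es@[f]) = insert (m f div d) (walk_verts u es)"
  by (auto simp: walk_verts_def)

lemma finite_walk_verts: "finite (walk_verts u es)"
  by (simp add: walk_verts_def)

lemma card_walk_verts: "card (walk_verts u es) \<le> length es + 1"
proof -
  have "card (walk_verts u es) \<le> Suc (card ((\<lambda>e. m e div d) ` set es))"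
    unfolding walk_verts_def by (simp add: card_insert_le_m1 card_insert_if)
  also have "card ((\<lambda>e. m e div d) ` set es) \<le> length es"
    by (metis card_image_le card_length finite_set le_trans)
  finally show ?thesis by simp
qed

lemma walk_verts_subset_U: "nb_walk u es \<Longrightarrow> u \<in> U \<Longrightarrow> walk_verts u es \<subseteq> U"
  by (auto simp: walk_verts_def nb_walk_def U_edge_def)

lemma start_in_walk_verts: "u \<in> walk_verts u es"
  by (simp add: walk_verts_def)

lemma walk_end_in_walk_verts: "walk_end u es \<in> walk_verts u es"
  by (auto simp: walk_end_def walk_verts_def)

lemma nb_walk_source_in_walk_verts:
  assumes "nb_walk u es" "i < length es"
  shows "es!i div d \<in> walk_verts u es"
proof (cases i)
  case 0
  then show ?thesis using assms by (auto simp: nb_walk_def walk_verts_def hd_conv_nth)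
next
  case (Suc j)
  then have "es!i div d = m (es!j) div d" using assms by (auto simp: nb_walk_def)
  then show ?thesis using assms Suc by (auto simp: walk_verts_def)
qed

lemma nb_walk_last_in_walk_verts: "nb_walk u es \<Longrightarrow> es \<noteq> [] \<Longrightarrow> last es div d \<in> walk_verts u es"
  using nb_walk_source_in_walk_verts[of u es "length es - 1"] by (simp add: last_conv_nth)

lemma nb_walk_vert_cases:
  assumes "nb_walk u es" "v \<in> walk_verts u es"
  shows "v = u \<or> v = walk_end u es \<or> (\<exists>i. Suc i < length es \<and> v = m (es!i) div d)"
proof -
  { assume "v \<noteq> u"
    then obtain i where i: "i < length es" "v = m (es!i) div d"
      using assms by (auto simp: walk_verts_def in_set_conv_nth)
    have ?thesis
    proof (cases "Suc i < length es")
      case False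
      then have "es \<noteq> []" "i = length es - 1" using i by auto
      then have "es!i = last es" by (simp add: last_conv_nth)
      then show ?thesis using i by (auto simp: walk_end_def)
    qed (use i in auto) }
  then show ?thesis by blast
qed

text \<open>Inner vertices of a non-backtracking walk are entered and left through distinct
  half-edges, so they have two neighbours on the walk; only the two ends need extra support.\<close>

lemma nb_walk_inner_vertex_supported:
  assumes "nb_walk u es" "Suc i < length es" "walk_verts u es \<subseteq> W"
  shows "2 \<le> nbrs_in n d m (\<lambda>x. x \<in> W) (m (es!i) div d)"
proof -
  have i: "i < length es" using assms by auto
  have e1: "U_edge (es!i)" "U_edge (es!Suc i)" using assms i by (auto simp: nb_walk_def)
  show ?thesis
  proof (rule two_le_nbrs_in[of "m (es!i)" "es!Suc i"])
    show "m (es!i) \<noteq> es!Suc i" "es!Suc i div d = m (es!i) div d" using assms by (auto simp: nb_walk_def)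
    show "m (es!i) < d*n" "es!Suc i < d*n" using e1 partner_less by (auto simp: U_edge_def)
    show "m (m (es!i)) div d \<in> W"
      using partner_partner e1 nb_walk_source_in_walk_verts[OF assms(1) i] assms(3)
      by (auto simp: U_edge_def)
    show "m (es!Suc i) div d \<in> W" using assms(2,3) by (auto simp: walk_verts_def)
  qed auto
qed

lemma nb_walk_verts_supported:
  assumes nb: "nb_walk u es" and sub: "walk_verts u es \<subseteq> W"
    and start: "2 \<le> nbrs_in n d m (\<lambda>x. x \<in> W) u"
    and stop: "2 \<le> nbrs_in n d m (\<lambda>x. x \<in> W) (walk_end u es)"
  shows "supported W (walk_verts u es)"
  unfolding supported_def
proof
  fix v assume "v \<in> walk_verts u es"
  from nb_walk_vert_cases[OF nb this]
  consider "v = u" | "v = walk_end u es" | i where "Suc i < length es" "v = m (es!i) div d"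
    by blast
  then show "2 \<le> nbrs_in n d m (\<lambda>x. x \<in> W) v"
  proof cases
    case 3
    then show ?thesis using nb_walk_inner_vertex_supported[OF nb 3(1) sub] by simp
  qed (use start stop in simp_all)
qed

lemma nb_walk_start_supported:
  assumes nb: "nb_walk u es" and ne: "es \<noteq> []" and sub: "walk_verts u es \<subseteq> W"
    and h: "h < d*n" "h div d = u" "m h div d \<in> W" "h \<noteq> hd es"
  shows "2 \<le> nbrs_in n d m (\<lambda>x. x \<in> W) u"
proof (rule two_le_nbrs_in[of h "hd es"])
  have "U_edge (hd es)" using nb ne by (simp add: nb_walk_U_edge)
  then show "hd es < d*n" by (rule U_edge_less)
  show "hd es div d = u" using nb ne by (simp add: nb_walk_def)
  show "m (hd es) div d \<in> W" using ne sub by (auto simp: walk_verts_def)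
qed (use h in auto)

lemma nb_walk_end_supported:
  assumes nb: "nb_walk u es" and ne: "es \<noteq> []" and sub: "walk_verts u es \<subseteq> W"
    and h: "h < d*n" "h div d = walk_end u es" "m h div d \<in> W" "h \<noteq> m (last es)"
  shows "2 \<le> nbrs_in n d m (\<lambda>x. x \<in> W) (walk_end u es)"
proof (rule two_le_nbrs_in[of h "m (last es)"])
  have l: "last es < d*n" using nb ne by (simp add: nb_walk_U_edge U_edge_less)
  then show "m (last es) < d*n" by (rule partner_less)
  show "m (last es) div d = walk_end u es" using ne by (simp add: walk_end_def)
  show "m (m (last es)) div d \<in> W"
    using partner_partner[OF l] nb_walk_last_in_walk_verts[OF nb ne] sub by auto
qed (use h in auto)

lemma closed_nb_walk_supported_subset:
  assumes "nb_walk u q" "q \<noteq> []" "walk_end u q = u"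
  shows "\<exists>S \<subseteq> walk_verts u q. S \<noteq> {} \<and> supported S S"
  using assms
proof (induction "length q" arbitrary: u q rule: less_induct)
  case less
  note nb = less.prems(1) and ne = less.prems(2) and closed = less.prems(3)
  have hd_last: "U_edge (hd q)" "U_edge (last q)" using nb ne by (auto simp: nb_walk_U_edge)
  show ?case
  proof (cases "hd q = m (last q)")
    case False
    let ?V = "walk_verts u q"
    have "2 \<le> nbrs_in n d m (\<lambda>x. x \<in> ?V) u"
    proof (rule nb_walk_start_supported[OF nb ne subset_refl])
      show "m (last q) < d*n" using hd_last by (simp add: U_edge_less partner_less)
      show "m (last q) div d = u" using closed ne by (simp add: walk_end_def)
      show "m (m (last q)) div d \<in> ?V"
        using hd_last nb_walk_last_in_walk_verts[OF nb ne] by (simp add: U_edge_less partner_partner)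
    qed (use False in simp)
    then have "supported ?V ?V" using closed by (intro nb_walk_verts_supported[OF nb]) simp_all
    then show ?thesis using start_in_walk_verts by blast
  next
    case True
    \<comment> \<open>the walk ends by reversing its first step; cut off both ends and recurse\<close>
    have "length q \<noteq> 1"
    proof
      assume "length q = 1"
      then obtain e where "q = [e]" by (metis One_nat_def length_0_conv length_Suc_conv)
      then show False using True hd_last partner_neq[OF U_edge_less] by (metis last_ConsL list.sel(1))
    qed
    then obtain e t where q0: "q = e # t" "t \<noteq> []" using ne by (cases q) auto
    then obtain r f where q: "q = e # r @ [f]" by (metis append_butlast_last_id)
    have ef: "m e = f" using True q hd_last by (simp add: partner_partner U_edge_less)
    define u' where "u' = m e div d"
    have nb': "nb_walk u' (r @ [f])" using nb q by (simp add: nb_walk_Cons u'_def)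
    then have nbr: "nb_walk u' r" and fdiv: "f div d = walk_end u' r" by (auto simp: nb_walk_snoc)
    have "r \<noteq> []"
      using nb ef q by (cases r) (auto simp: nb_walk_Cons)
    moreover have "walk_end u' r = u'" using fdiv ef by (simp add: u'_def)
    moreover have "length r < length q" using q by simp
    ultimately obtain S where "S \<subseteq> walk_verts u' r" "S \<noteq> {}" "supported S S"
      using less.hyps nbr by blast
    moreover have "walk_verts u' r \<subseteq> walk_verts u q" using q by (auto simp: walk_verts_def u'_def)
    ultimately show ?thesis by blast
  qed
qed

lemma nb_walk_hd: "nb_walk u es \<Longrightarrow> es \<noteq> [] \<Longrightarrow> hd es div d = u"
  by (simp add: nb_walk_def)

lemma partner_in_walk_verts: "e \<in> set es \<Longrightarrow> m e div d \<in> walk_verts u es"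
  by (simp add: walk_verts_def)

lemma diverging_nb_walks_supported:
  assumes nbp: "nb_walk u p" and nbq: "nb_walk u q" and ne: "p \<noteq> []" "q \<noteq> []"
    and ends: "walk_end u p = walk_end u q" and first: "hd p \<noteq> hd q" and final: "last p \<noteq> last q"
  shows "supported (walk_verts u p \<union> walk_verts u q) (walk_verts u p \<union> walk_verts u q)"
proof -
  define W where "W = walk_verts u p \<union> walk_verts u q"
  have U: "U_edge (hd p)" "U_edge (hd q)" "U_edge (last p)" "U_edge (last q)"
    using nbp nbq ne by (simp_all add: nb_walk_U_edge)
  have lt: "hd p < d*n" "hd q < d*n" "m (last p) < d*n" "m (last q) < d*n"
    using U by (simp_all add: U_edge_less partner_less)
  have hd_W: "m (hd p) div d \<in> W" "m (hd q) div d \<in> W"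
    using ne by (simp_all add: W_def partner_in_walk_verts)
  have last_W: "m (m (last p)) div d \<in> W" "m (m (last q)) div d \<in> W"
    using U nb_walk_last_in_walk_verts[OF nbp ne(1)] nb_walk_last_in_walk_verts[OF nbq ne(2)]
    by (simp_all add: W_def U_edge_less partner_partner)
  have "last p < d*n" "last q < d*n" using U by (simp_all add: U_edge_less)
  then have partners: "m (last p) \<noteq> m (last q)" using final partner_inj by blast
  have end_div: "m (last p) div d = walk_end u q" "m (last q) div d = walk_end u p"
    using ne ends by (simp_all add: walk_end_def)
  have "supported W (walk_verts u p)"
  proof (rule nb_walk_verts_supported[OF nbp])
    show "2 \<le> nbrs_in n d m (\<lambda>x. x \<in> W) u"
      using nb_walk_start_supported[OF nbp ne(1) _ lt(2) nb_walk_hd[OF nbq ne(2)] hd_W(2)] first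
      by (simp add: W_def)
    show "2 \<le> nbrs_in n d m (\<lambda>x. x \<in> W) (walk_end u p)"
      using nb_walk_end_supported[OF nbp ne(1) _ lt(4) end_div(2) last_W(2)] partners
      by (simp add: W_def)
  qed (simp add: W_def)
  moreover have "supported W (walk_verts u q)"
  proof (rule nb_walk_verts_supported[OF nbq])
    show "2 \<le> nbrs_in n d m (\<lambda>x. x \<in> W) u"
      using nb_walk_start_supported[OF nbq ne(2) _ lt(1) nb_walk_hd[OF nbp ne(1)] hd_W(1)] first
      by (simp add: W_def)
    show "2 \<le> nbrs_in n d m (\<lambda>x. x \<in> W) (walk_end u q)"
      using nb_walk_end_supported[OF nbq ne(2) _ lt(3) end_div(1) last_W(1)] partners
      by (simp add: W_def)
  qed (simp add: W_def)
  ultimately show ?thesis unfolding W_def by (rule supported_Un)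
qed

text \<open>After stripping a common first and a common last step, either one walk is empty (and the other
  is closed), or both first and both last steps differ.\<close>

lemma colliding_nb_walks_supported_subset:
  assumes "nb_walk u p" "nb_walk u q" "walk_end u p = walk_end u q" "p \<noteq> q"
  shows "\<exists>S \<subseteq> walk_verts u p \<union> walk_verts u q. S \<noteq> {} \<and> supported S S"
  using assms
proof (induction "length p + length q" arbitrary: u p q rule: less_induct)
  case less
  note nbp = less.prems(1) and nbq = less.prems(2) and ends = less.prems(3) and neq = less.prems(4)
  consider "p = []" | "q = []" | "p \<noteq> []" "q \<noteq> []" by blast
  then show ?case
  proof cases
    case 1
    then have "q \<noteq> []" "walk_end u q = u" using neq ends by (auto simp: walk_end_def)
    then show ?thesis using closed_nb_walk_supported_subset[OF nbq] by blast
  next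
    case 2
    then have "p \<noteq> []" "walk_end u p = u" using neq ends by (auto simp: walk_end_def)
    then show ?thesis using closed_nb_walk_supported_subset[OF nbp] by blast
  next
    case ne: 3
    show ?thesis
    proof (cases "hd p = hd q")
      case True
      obtain a p' q' where p: "p = a # p'" and q: "q = a # q'"
        using ne True by (cases p; cases q) auto
      define u' where "u' = m a div d"
      have "length p' + length q' < length p + length q" using p q by simp
      moreover have "nb_walk u' p'" "nb_walk u' q'" using nbp nbq p q by (auto simp: nb_walk_Cons u'_def)
      moreover have "walk_end u' p' = walk_end u' q'" "p' \<noteq> q'"
        using ends neq p q by (simp_all add: walk_end_Cons u'_def)
      ultimately have "\<exists>S \<subseteq> walk_verts u' p' \<union> walk_verts u' q'. S \<noteq> {} \<and> supported S S"
        by (rule less.hyps)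
      moreover have "walk_verts u' p' \<subseteq> walk_verts u p" "walk_verts u' q' \<subseteq> walk_verts u q"
        using p q by (auto simp: walk_verts_def u'_def)
      ultimately show ?thesis by blast
    next
      case first: False
      show ?thesis
      proof (cases "last p = last q")
        case True
        define p' q' f where "p' = butlast p" "q' = butlast q" "f = last p"
        have p: "p = p' @ [f]" using ne(1) by (simp add: p'_q'_f_def)
        have q: "q = q' @ [f]" using ne(2) True by (simp add: p'_q'_f_def)
        have "length p' + length q' < length p + length q" using p q by simp
        moreover have "nb_walk u p'" "nb_walk u q'" "walk_end u p' = walk_end u q'"
          using nbp nbq p q by (auto simp: nb_walk_snoc)
        moreover have "p' \<noteq> q'" using neq p q by simp
        ultimately have "\<exists>S \<subseteq> walk_verts u p' \<union> walk_verts u q'. S \<noteq> {} \<and> supported S S"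
          by (rule less.hyps)
        moreover have "walk_verts u p' \<subseteq> walk_verts u p" "walk_verts u q' \<subseteq> walk_verts u q"
          using p q by (auto simp: walk_verts_snoc)
        ultimately show ?thesis by blast
      next
        case False
        then have "supported (walk_verts u p \<union> walk_verts u q) (walk_verts u p \<union> walk_verts u q)"
          using diverging_nb_walks_supported[OF nbp nbq ne ends first] by blast
        then show ?thesis using start_in_walk_verts by blast
      qed
    qed
  qed
qed

definition nbrs_H :: "nat \<Rightarrow> nat" where
  "nbrs_H v = nbrs_in n d m (\<lambda>x. x \<in> H) v"

definition anchored :: "nat set \<Rightarrow> bool" where
  "anchored S \<longleftrightarrow> S \<subseteq> U \<and> S \<noteq> {} \<and> supported (H \<union> S) S"

lemma anchored_subset: "anchored S \<Longrightarrow> S \<subseteq> {..<n} - H"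
  by (simp add: anchored_def U_def)

lemma anchored_if_supported: "S \<subseteq> U \<Longrightarrow> S \<noteq> {} \<Longrightarrow> supported S S \<Longrightarrow> anchored S"
  unfolding anchored_def by (meson Un_upper2 supported_mono)

lemma card_U_edges_at: "v \<in> U \<Longrightarrow> card {f. U_edge f \<and> f div d = v} = d - nbrs_H v"
proof -
  assume v: "v \<in> U"
  have "nbrs_H v + nbrs_in n d m (\<lambda>x. x \<notin> H) v = d" unfolding nbrs_H_def
    by (rule nbrs_in_add_compl[OF U_less[OF v]])
  moreover have "{h. h < d*n \<and> h div d = v \<and> m h div d \<notin> H} = {f. U_edge f \<and> f div d = v}"
    using v partner_vertex_less by (auto simp: U_edge_def U_def)
  ultimately show ?thesis unfolding nbrs_in_def by simp
qed

lemma nb_walk_between_H_anchored: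
  assumes nb: "nb_walk u es" and ne: "es \<noteq> []" and u: "u \<in> U"
    and start: "1 \<le> nbrs_H u" and stop: "1 \<le> nbrs_H (walk_end u es)"
  shows "anchored (walk_verts u es)"
proof -
  let ?V = "walk_verts u es"
  have sub: "?V \<subseteq> U" by (rule walk_verts_subset_U[OF nb u])
  have U: "U_edge (hd es)" "U_edge (last es)" using nb ne by (simp_all add: nb_walk_U_edge)
  obtain h where h: "h < d*n" "h div d = u" "m h div d \<in> H"
    using start unfolding nbrs_H_def by (rule obtain_nbr_half_edge)
  obtain h' where h': "h' < d*n" "h' div d = walk_end u es" "m h' div d \<in> H"
    using stop unfolding nbrs_H_def by (rule obtain_nbr_half_edge)
  have "m (hd es) div d \<in> U" "m (m (last es)) div d \<in> U"
    using U by (simp_all add: U_edge_def partner_partner)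
  then have "h \<noteq> hd es" "h' \<noteq> m (last es)" using h(3) h'(3) by (auto simp: U_def)
  then have "2 \<le> nbrs_in n d m (\<lambda>x. x \<in> H \<union> ?V) u"
    "2 \<le> nbrs_in n d m (\<lambda>x. x \<in> H \<union> ?V) (walk_end u es)"
    by (intro nb_walk_start_supported[OF nb ne _ h(1,2)] nb_walk_end_supported[OF nb ne _ h'(1,2)];
        use h(3) h'(3) in auto)+
  then have "supported (H \<union> ?V) ?V" by (intro nb_walk_verts_supported[OF nb]) auto
  then show ?thesis using sub start_in_walk_verts unfolding anchored_def by blast
qed

definition walk_extensions :: "nat \<Rightarrow> nat list \<Rightarrow> nat set" where
  "walk_extensions u es = {f. U_edge f \<and> f div d = walk_end u es \<and> (es \<noteq> [] \<longrightarrow> f \<noteq> m (last es))}"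

definition nb_walks_of_length :: "nat \<Rightarrow> nat \<Rightarrow> nat list set" where
  "nb_walks_of_length u r = {es. nb_walk u es \<and> length es = r}"

lemma finite_nb_walks_of_length: "finite (nb_walks_of_length u r)"
proof -
  have "nb_walks_of_length u r \<subseteq> {es. set es \<subseteq> {..<d*n} \<and> length es = r}"
    by (auto simp: nb_walks_of_length_def nb_walk_def U_edge_def)
  then show ?thesis using finite_lists_length_eq[of "{..<d*n}" r] finite_subset by blast
qed

lemma nb_walks_of_length_Suc:
  "nb_walks_of_length u (Suc r) = (\<lambda>(es, f). es @ [f]) ` (SIGMA es:nb_walks_of_length u r. walk_extensions u es)"
proof (rule set_eqI)
  fix xs
  show "xs \<in> nb_walks_of_length u (Suc r) \<longleftrightarrow>
    xs \<in> (\<lambda>(es, f). es @ [f]) ` (SIGMA es:nb_walks_of_length u r. walk_extensions u es)"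
  proof
    assume a: "xs \<in> nb_walks_of_length u (Suc r)"
    then have "xs \<noteq> []" by (auto simp: nb_walks_of_length_def)
    then have xs: "xs = butlast xs @ [last xs]" by simp
    have "nb_walk u (butlast xs @ [last xs])" using a xs by (simp add: nb_walks_of_length_def)
    then have "butlast xs \<in> nb_walks_of_length u r" "last xs \<in> walk_extensions u (butlast xs)"
      using a by (auto simp: nb_walks_of_length_def walk_extensions_def nb_walk_snoc)
    then show "xs \<in> (\<lambda>(es, f). es @ [f]) ` (SIGMA es:nb_walks_of_length u r. walk_extensions u es)"
      using xs by (intro image_eqI[of _ _ "(butlast xs, last xs)"]) auto
  qed (auto simp: nb_walks_of_length_def walk_extensions_def nb_walk_snoc nb_walk_Cons walk_end_def)
qed

lemma card_nb_walks_of_length_Suc: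
  "card (nb_walks_of_length u (Suc r)) = (\<Sum>es\<in>nb_walks_of_length u r. card (walk_extensions u es))"
proof -
  have "inj_on (\<lambda>(es, f). es @ [f]) (SIGMA es:nb_walks_of_length u r. walk_extensions u es)"
    by (auto simp: inj_on_def)
  moreover have "finite (walk_extensions u es)" for es
    unfolding walk_extensions_def by (rule finite_U_edges)
  ultimately show ?thesis unfolding nb_walks_of_length_Suc
    by (simp add: card_image card_SigmaI finite_nb_walks_of_length)
qed

lemma card_walk_extensions:
  assumes nb: "nb_walk u es" and u: "u \<in> U"
  shows "card (walk_extensions u es) + (if es = [] then 0 else 1) = d - nbrs_H (walk_end u es)"
proof (cases "es = []")
  case True
  then show ?thesis using card_U_edges_at[OF u] by (simp add: walk_extensions_def walk_end_def)
next
  case False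
  let ?F = "{f. U_edge f \<and> f div d = walk_end u es}"
  have ev: "walk_end u es \<in> U" using walk_verts_subset_U[OF nb u] walk_end_in_walk_verts by blast
  have l: "U_edge (last es)" using nb False by (simp add: nb_walk_U_edge)
  have ed: "m (last es) div d = walk_end u es" using False by (simp add: walk_end_def)
  have "U_edge (m (last es))"
    using l ev ed by (simp add: U_edge_def partner_less partner_partner)
  then have mem: "m (last es) \<in> ?F" using ed by simp
  have "walk_extensions u es = ?F - {m (last es)}"
    using False by (auto simp: walk_extensions_def)
  moreover have "0 < card ?F" using mem finite_U_edges by (auto simp: card_gt_0_iff)
  ultimately have "card (walk_extensions u es) + 1 = card ?F"
    using mem finite_U_edges by (simp add: card_Diff_singleton)
  then show ?thesis using card_U_edges_at[OF ev] False by simp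
qed

text \<open>In a graph of minimum degree 3, non-backtracking walks avoiding neighbours of \<open>H\<close> branch
  at least twice at every step.\<close>

lemma two_power_le_card_nb_walks:
  assumes d: "3 \<le> d" and u0: "u0 \<in> U" and start: "nbrs_H u0 \<le> 1"
    and far: "\<forall>es. nb_walk u0 es \<and> 1 \<le> length es \<and> length es \<le> R \<longrightarrow> nbrs_H (walk_end u0 es) = 0"
  shows "r \<le> R \<Longrightarrow> 2^r \<le> card (nb_walks_of_length u0 r)"
proof (induction r)
  case 0
  have "nb_walks_of_length u0 0 = {[]}" by (auto simp: nb_walks_of_length_def)
  then show ?case by simp
next
  case (Suc r)
  have "2 \<le> card (walk_extensions u0 es)" if es: "es \<in> nb_walks_of_length u0 r" for es
  proof -
    have nb: "nb_walk u0 es" and len: "length es = r" using es by (auto simp: nb_walks_of_length_def)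
    show ?thesis
    proof (cases "es = []")
      case True
      then show ?thesis using card_walk_extensions[OF nb u0] start d by (simp add: walk_end_def)
    next
      case False
      then have "nbrs_H (walk_end u0 es) = 0" using far nb len Suc.prems by (simp add: Suc_le_eq)
      then show ?thesis using card_walk_extensions[OF nb u0] False d by simp
    qed
  qed
  then have "(\<Sum>es\<in>nb_walks_of_length u0 r. 2) \<le> card (nb_walks_of_length u0 (Suc r))"
    unfolding card_nb_walks_of_length_Suc by (intro sum_mono) auto
  then show ?case using Suc by simp
qed

lemma anchored_of_many_nb_walks:
  assumes u0: "u0 \<in> U" and many: "n < card (nb_walks_of_length u0 R)"
  shows "\<exists>S. anchored S \<and> card S \<le> 2*R+2"
proof -
  have "walk_end u0 ` nb_walks_of_length u0 R \<subseteq> U"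
    using walk_verts_subset_U[OF _ u0] walk_end_in_walk_verts by (auto simp: nb_walks_of_length_def)
  then have "card (walk_end u0 ` nb_walks_of_length u0 R) \<le> card U"
    by (intro card_mono) (simp_all add: U_def)
  then have "card (walk_end u0 ` nb_walks_of_length u0 R) \<le> n"
    using card_U_le by linarith
  then have "\<not> inj_on (walk_end u0) (nb_walks_of_length u0 R)"
    using many card_image by fastforce
  then obtain p q where pq: "p \<in> nb_walks_of_length u0 R" "q \<in> nb_walks_of_length u0 R"
    "p \<noteq> q" "walk_end u0 p = walk_end u0 q"
    unfolding inj_on_def by blast
  have nb: "nb_walk u0 p" "nb_walk u0 q" "length p = R" "length q = R"
    using pq by (auto simp: nb_walks_of_length_def)
  obtain S where S: "S \<subseteq> walk_verts u0 p \<union> walk_verts u0 q" "S \<noteq> {}" "supported S S"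
    using colliding_nb_walks_supported_subset[OF nb(1,2) pq(4,3)] by blast
  have "S \<subseteq> U" using S(1) walk_verts_subset_U[OF nb(1) u0] walk_verts_subset_U[OF nb(2) u0] by blast
  then have "anchored S" using anchored_if_supported S by simp
  moreover have "card S \<le> 2*R+2"
  proof -
    have "card S \<le> card (walk_verts u0 p \<union> walk_verts u0 q)"
      using S(1) by (intro card_mono) (simp_all add: finite_walk_verts)
    also have "\<dots> \<le> card (walk_verts u0 p) + card (walk_verts u0 q)" by (rule card_Un_le)
    also have "\<dots> \<le> 2*R+2" using card_walk_verts[of u0 p] card_walk_verts[of u0 q] nb by simp
    finally show ?thesis .
  qed
  ultimately show ?thesis by blast
qed

text \<open>The walk start \<open>u\<^sub>0\<close> is chosen with a neighbour in \<open>H\<close> if possible: then a short walk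
  reaching another neighbour of \<open>H\<close> closes an anchored path.\<close>

lemma small_anchored_set_exists:
  assumes d: "3 \<le> d" and U: "U \<noteq> {}" and R: "n < 2^R"
  shows "\<exists>S. anchored S \<and> card S \<le> 2*R+2"
proof (cases "\<exists>v\<in>U. 2 \<le> nbrs_H v")
  case True
  then obtain v where v: "v \<in> U" "2 \<le> nbrs_H v" by blast
  have "nbrs_H v \<le> nbrs_in n d m (\<lambda>x. x \<in> H \<union> {v}) v"
    unfolding nbrs_H_def by (rule nbrs_in_mono) simp
  then have "anchored {v}" using v unfolding anchored_def supported_def by simp
  then show ?thesis by (intro exI[of _ "{v}"]) simp
next
  case False
  then have le1: "\<forall>v\<in>U. nbrs_H v \<le> 1" by auto
  obtain u0 where u0: "u0 \<in> U" and pick: "(\<exists>v\<in>U. nbrs_H v = 1) \<longrightarrow> nbrs_H u0 = 1"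
    using U by (cases "\<exists>v\<in>U. nbrs_H v = 1") auto
  show ?thesis
  proof (cases "\<exists>es. nb_walk u0 es \<and> 1 \<le> length es \<and> length es \<le> R \<and> nbrs_H (walk_end u0 es) \<noteq> 0")
    case True
    then obtain es where es: "nb_walk u0 es" "1 \<le> length es" "length es \<le> R" "nbrs_H (walk_end u0 es) \<noteq> 0"
      by blast
    have "walk_end u0 es \<in> U" using walk_verts_subset_U[OF es(1) u0] walk_end_in_walk_verts by blast
    then have "nbrs_H (walk_end u0 es) = 1" "nbrs_H u0 = 1" using le1 es(4) pick by fastforce+
    moreover have "es \<noteq> []" using es(2) by auto
    ultimately have "anchored (walk_verts u0 es)"
      using nb_walk_between_H_anchored[OF es(1) _ u0] by simp
    moreover have "card (walk_verts u0 es) \<le> 2*R+2" using card_walk_verts[of u0 es] es(3) by simp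
    ultimately show ?thesis by blast
  next
    case False
    then have "2^R \<le> card (nb_walks_of_length u0 R)"
      using two_power_le_card_nb_walks[OF d u0 bspec[OF le1 u0]] by blast
    then show ?thesis using anchored_of_many_nb_walks[OF u0] R by simp
  qed
qed

end

section \<open>Elementary estimates\<close>

lemma less_two_power_ceiling_log: assumes "1 \<le> (n::nat)" shows "n < 2 ^ (nat \<lceil>log 2 n\<rceil> + 1)"
proof -
  have "real n = 2 powr (log 2 n)" using assms by simp
  also have "\<dots> \<le> 2 powr (nat \<lceil>log 2 n\<rceil>)"
    using assms by (intro powr_mono) (auto simp: of_nat_nat le_of_int_ceiling)
  also have "\<dots> = 2 ^ (nat \<lceil>log 2 n\<rceil>)" by (simp add: powr_realpow)
  finally have "real n \<le> 2 ^ (nat \<lceil>log 2 n\<rceil>)" .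
  moreover have "(2::real) ^ (nat \<lceil>log 2 n\<rceil>) < 2 ^ (nat \<lceil>log 2 n\<rceil> + 1)" by simp
  ultimately have "real n < 2 ^ (nat \<lceil>log 2 n\<rceil> + 1)" by linarith
  then have "real n < real ((2::nat) ^ (nat \<lceil>log 2 n\<rceil> + 1))" by simp
  then show ?thesis by (simp only: of_nat_less_iff)
qed

lemma power_ceiling_log_ge:
  fixes b :: real
  assumes b: "0 < b" "b < 1" and n: "1 \<le> (n::nat)"
  shows "b^6 * real n powr (2 * ln b / ln 2) \<le> b ^ (2 * (nat \<lceil>log 2 n\<rceil> + 1) + 2)"
proof -
  define N where "N = 2 * (nat \<lceil>log 2 n\<rceil> + 1) + 2"
  have "real (nat \<lceil>log 2 n\<rceil>) \<le> log 2 n + 1"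
    using n by (simp add: of_nat_nat of_int_ceiling_le_add_one)
  then have "real N \<le> 6 + 2 * log 2 n" by (simp add: N_def)
  then have "(6 + 2 * log 2 n) * ln b \<le> real N * ln b"
    using b by (intro mult_right_mono_neg) auto
  then have "exp ((6 + 2 * log 2 n) * ln b) \<le> exp (real N * ln b)" by simp
  moreover have "exp (real N * ln b) = b ^ N" using b by (simp add: exp_of_nat_mult)
  moreover have "exp ((6 + 2 * log 2 n) * ln b) = b^6 * real n powr (2 * ln b / ln 2)"
  proof -
    have "exp ((6 + 2 * log 2 n) * ln b) = exp (ln b * 6) * exp (ln n * (2 * ln b / ln 2))"
      by (simp add: log_def exp_add[symmetric] algebra_simps)
    also have "exp (ln b * 6) = b^6" using exp_of_nat2_mult[of "ln b" 6] b by simp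
    also have "exp (ln n * (2 * ln b / ln 2)) = real n powr (2 * ln b / ln 2)"
      using n by (simp add: powr_def)
    finally show ?thesis .
  qed
  ultimately show ?thesis unfolding N_def by simp
qed

text \<open>The exponent \<open>C\<close> is chosen so that \<open>n\<^bsup>C\<^esup>\<close> steps, each killing the potential with probability
  at least \<open>b\<^bsup>2 log\<^sub>2 n + 6\<^esup> = b\<^sup>6 n\<^bsup>C-2\<^esup>\<close>, leave a factor \<open>exp(-b\<^sup>6 n\<^sup>2/2)\<close>.\<close>

lemma contraction_power_le_exp:
  fixes b :: real
  assumes b: "0 < b" "b < 1" and n: "1 \<le> (n::nat)"
  shows "(1 - b^(2*(nat \<lceil>log 2 n\<rceil> + 1)+2)/2) ^ nat \<lceil>real n powr (2 - 2 * ln b / ln 2)\<rceil>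
     \<le> exp (-(b^6/2) * real n^2)"
proof -
  define C where "C = 2 - 2 * ln b / ln 2"
  define a where "a = b^(2*(nat \<lceil>log 2 n\<rceil> + 1)+2)"
  define T where "T = nat \<lceil>real n powr C\<rceil>"
  have low: "b^6 * real n powr (2 - C) \<le> a"
    unfolding a_def C_def using power_ceiling_log_ge[OF b n] by simp
  have "0 \<le> b" "b \<le> 1" using b by simp_all
  then have a: "0 \<le> a" "a \<le> 1" unfolding a_def by (simp_all only: zero_le_power power_le_one)
  have TC: "real n powr C \<le> real T" unfolding T_def by (simp add: of_nat_nat le_of_int_ceiling)
  have "b^6 * real n powr (2 - C) * real n powr C \<le> a * real T"
    using low TC a by (intro mult_mono) auto
  moreover have "real n powr (2 - C) * real n powr C = real n ^ 2"
    using n by (simp add: powr_add[symmetric] powr_realpow)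
  ultimately have na: "b^6 * real n ^ 2 \<le> a * real T" by (simp add: mult.assoc)
  have "(1 - a/2) ^ T \<le> exp (-a/2) ^ T"
    using a by (intro power_mono) (auto simp: exp_ge_add_one_self[of "-a/2", simplified])
  also have "\<dots> = exp (real T * (-a/2))" by (rule exp_of_nat_mult[symmetric])
  also have "\<dots> \<le> exp (-(b^6/2) * real n^2)" using na by (simp add: mult.commute)
  finally show ?thesis unfolding a_def T_def C_def .
qed

lemma nn_integral_pmf_le_by_event:
  fixes a b :: real
  assumes f: "\<And>x. x \<in> set_pmf M \<Longrightarrow> f x \<le> ennreal (if x \<in> E then a else b)"
    and ab: "0 \<le> a" "a \<le> b"
  shows "(\<integral>\<^sup>+x. f x \<partial>measure_pmf M) \<le> ennreal (b - (b - a) * measure_pmf.prob M E)"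
proof -
  define P where "P = measure_pmf.prob M E"
  have P: "0 \<le> P" "P \<le> 1" by (simp_all add: P_def)
  have "(\<integral>\<^sup>+x. f x \<partial>measure_pmf M) \<le>
      (\<integral>\<^sup>+x. ennreal a * indicator E x + ennreal b * indicator (UNIV - E) x \<partial>measure_pmf M)"
  proof (rule nn_integral_mono_AE)
    show "AE x in measure_pmf M. f x \<le> ennreal a * indicator E x + ennreal b * indicator (UNIV - E) x"
      unfolding AE_measure_pmf_iff
    proof
      fix x assume "x \<in> set_pmf M"
      from f[OF this] show "f x \<le> ennreal a * indicator E x + ennreal b * indicator (UNIV - E) x"
        by (cases "x \<in> E") simp_all
    qed
  qed
  also have "\<dots> = ennreal a * emeasure (measure_pmf M) E + ennreal b * emeasure (measure_pmf M) (UNIV - E)"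
    by (simp add: nn_integral_add nn_integral_cmult_indicator)
  also have "\<dots> = ennreal (a * P + b * (1 - P))"
  proof -
    have "measure_pmf.prob M (UNIV - E) = 1 - P"
      unfolding P_def using measure_pmf.prob_compl[of E M] by simp
    moreover have "ennreal (a * P + b * (1 - P)) = ennreal a * ennreal P + ennreal b * ennreal (1 - P)"
      using ab P by (simp add: ennreal_plus ennreal_mult)
    ultimately show ?thesis by (simp add: measure_pmf.emeasure_eq_measure P_def)
  qed
  also have "a * P + b * (1 - P) = b - (b - a) * P" by (simp add: algebra_simps)
  finally show ?thesis unfolding P_def .
qed


section \<open>The healthy core of the threshold contact process\<close>

locale threshold_contact = config_graph n "Suc \<theta>" m for n \<theta> :: nat and m +
  fixes p :: real
  assumes p_pos: "0 < p" and p_less_1: "p < 1" and threshold: "2 \<le> \<theta>"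
begin

abbreviation step :: "(nat \<Rightarrow> bool) \<Rightarrow> (nat \<Rightarrow> bool) pmf" where
  "step X \<equiv> cp_step n (Suc \<theta>) m \<theta> p X"

abbreviation traj :: "(nat \<Rightarrow> bool) \<Rightarrow> nat \<Rightarrow> (nat \<Rightarrow> bool) list pmf" where
  "traj X0 k \<equiv> cp_traj n (Suc \<theta>) m \<theta> p X0 k"

lemma cp_step_extinct: "(\<forall>v<n. \<not> X v) \<Longrightarrow> step X = return_pmf healthy"
proof -
  assume X: "\<forall>v<n. \<not> X v"
  then have "nbrs_in n (Suc \<theta>) m X v = 0" for v
    unfolding nbrs_in_def using partner_vertex_less by auto
  then have "step X = Pi_pmf {..<n} False (\<lambda>v. return_pmf False)"
    unfolding cp_step_def using threshold by (intro Pi_pmf_cong) auto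
  also have "\<dots> = return_pmf healthy" by (simp add: healthy_def)
  finally show ?thesis .
qed

lemma set_pmf_cp_step:
  assumes "X' \<in> set_pmf (step X)" "v < n" "X' v"
  shows "\<theta> \<le> nbrs_in n (Suc \<theta>) m X v"
proof (rule ccontr)
  define q where "q = (\<lambda>v. if \<theta> \<le> nbrs_in n (Suc \<theta>) m X v then bernoulli_pmf p else return_pmf False)"
  assume "\<not> \<theta> \<le> nbrs_in n (Suc \<theta>) m X v"
  then have "q v = return_pmf False" by (simp add: q_def)
  moreover have "set_pmf (step X) \<subseteq> PiE_dflt {..<n} False (set_pmf \<circ> q)"
    unfolding cp_step_def q_def[symmetric] by (rule set_Pi_pmf_subset') simp
  then have "X' v \<in> set_pmf (q v)" using assms(1,2) unfolding PiE_dflt_def by auto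
  ultimately show False using assms(3) by simp
qed

text \<open>A healthy vertex with two healthy neighbours in a \<open>(\<theta>+1)\<close>-regular graph has fewer than
  \<open>\<theta>\<close> infected neighbours.\<close>

lemma absorbing_stays_healthy:
  assumes S: "absorbing S" "\<forall>v\<in>S. \<not> X v" and X': "X' \<in> set_pmf (step X)" and v: "v \<in> S"
  shows "\<not> X' v"
proof
  have v_lt: "v < n" using S(1) v by (auto simp: absorbing_def)
  assume "X' v"
  then have "\<theta> \<le> nbrs_in n (Suc \<theta>) m X v" by (rule set_pmf_cp_step[OF X' v_lt])
  also have "\<dots> \<le> nbrs_in n (Suc \<theta>) m (\<lambda>x. x \<notin> S) v" using S(2) by (intro nbrs_in_mono) auto
  finally have "\<theta> \<le> nbrs_in n (Suc \<theta>) m (\<lambda>x. x \<notin> S) v" .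
  moreover have "2 \<le> nbrs_in n (Suc \<theta>) m (\<lambda>x. x \<in> S) v"
    using S(1) v by (auto simp: absorbing_def supported_def)
  ultimately show False using nbrs_in_add_compl[OF v_lt, of "\<lambda>x. x \<in> S"] by linarith
qed

lemma prob_cp_step_all_healthy:
  assumes S: "S \<subseteq> {..<n}"
  shows "(1 - p) ^ card S \<le> measure_pmf.prob (step X) {X'. \<forall>v\<in>S. \<not> X' v}"
proof -
  define q where "q = (\<lambda>v. if \<theta> \<le> nbrs_in n (Suc \<theta>) m X v then bernoulli_pmf p else return_pmf False)"
  define B where "B = (\<lambda>v. if v \<in> S then {False} else (UNIV :: bool set))"
  have "{X'. \<forall>v\<in>S. \<not> X' v} = Pi {..<n} B"
    using S by (auto simp: B_def Pi_def)
  then have "measure_pmf.prob (step X) {X'. \<forall>v\<in>S. \<not> X' v} = (\<Prod>x\<in>{..<n}. measure_pmf.prob (q x) (B x))"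
    unfolding cp_step_def q_def[symmetric] by (simp add: measure_Pi_pmf_Pi)
  also have "\<dots> \<ge> (\<Prod>x\<in>{..<n}. if x \<in> S then 1 - p else 1)"
  proof (rule prod_mono)
    fix x
    have "1 - p \<le> measure_pmf.prob (q x) {False}"
      using p_pos p_less_1 by (auto simp: q_def measure_pmf_single)
    then show "0 \<le> (if x \<in> S then 1 - p else 1) \<and> (if x \<in> S then 1 - p else 1) \<le> measure_pmf.prob (q x) (B x)"
      using p_less_1 by (auto simp: B_def)
  qed
  also have "(\<Prod>x\<in>{..<n}. if x \<in> S then 1 - p else 1) = (1 - p) ^ card S"
    using S by (simp add: prod.If_cases Int_absorb1)
  finally show ?thesis .
qed

definition healthy_core :: "(nat \<Rightarrow> bool) \<Rightarrow> nat set" where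
  "healthy_core X = \<Union>{S. S \<subseteq> {v. v < n \<and> \<not> X v} \<and> absorbing S}"

lemma healthy_core_subset: "healthy_core X \<subseteq> {v. v < n \<and> \<not> X v}"
  by (auto simp: healthy_core_def)

lemma finite_healthy_core: "finite (healthy_core X)"
  by (rule finite_subset[of _ "{..<n}"]) (use healthy_core_subset in auto)

lemma absorbing_subset_healthy_core:
  "S \<subseteq> {v. v < n \<and> \<not> X v} \<Longrightarrow> absorbing S \<Longrightarrow> S \<subseteq> healthy_core X"
  by (auto simp: healthy_core_def)

lemma absorbing_healthy_core: "absorbing (healthy_core X)"
  unfolding absorbing_def supported_def
proof (intro conjI ballI)
  show "healthy_core X \<subseteq> {..<n}" using healthy_core_subset by auto
  fix v assume "v \<in> healthy_core X"
  then obtain S where S: "v \<in> S" "S \<subseteq> {v. v < n \<and> \<not> X v}" "absorbing S"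
    unfolding healthy_core_def by blast
  have "2 \<le> nbrs_in n (Suc \<theta>) m (\<lambda>x. x \<in> S) v"
    using S(1,3) by (auto simp: absorbing_def supported_def)
  also have "\<dots> \<le> nbrs_in n (Suc \<theta>) m (\<lambda>x. x \<in> healthy_core X) v"
    using absorbing_subset_healthy_core[OF S(2,3)] by (intro nbrs_in_mono) auto
  finally show "2 \<le> nbrs_in n (Suc \<theta>) m (\<lambda>x. x \<in> healthy_core X) v" .
qed

lemma healthy_core_mono_step: "X' \<in> set_pmf (step X) \<Longrightarrow> healthy_core X \<subseteq> healthy_core X'"
proof -
  assume X': "X' \<in> set_pmf (step X)"
  have "healthy_core X \<subseteq> {v. v < n \<and> \<not> X' v}"
    using absorbing_stays_healthy[OF absorbing_healthy_core _ X'] healthy_core_subset by blast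
  then show ?thesis using absorbing_healthy_core by (rule absorbing_subset_healthy_core)
qed

lemma healthy_core_Un_anchored_subset:
  assumes S: "complement_walks.anchored n (Suc \<theta>) m (healthy_core X) S"
    and X': "X' \<in> set_pmf (step X)" and healed: "\<forall>v\<in>S. \<not> X' v"
  shows "healthy_core X \<union> S \<subseteq> healthy_core X'"
proof -
  interpret A: complement_walks n "Suc \<theta>" m "healthy_core X" by unfold_locales
  have A: "absorbing (healthy_core X)" by (rule absorbing_healthy_core)
  have S_lt: "S \<subseteq> {..<n}" using A.anchored_subset[OF S] by blast
  have "absorbing (healthy_core X \<union> S)"
    unfolding absorbing_def
  proof (intro conjI supported_Un)
    show "healthy_core X \<union> S \<subseteq> {..<n}" using healthy_core_subset S_lt by auto
    show "supported (healthy_core X \<union> S) (healthy_core X)"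
      using A unfolding absorbing_def by (meson Un_upper1 supported_mono)
    show "supported (healthy_core X \<union> S) S"
      using S by (simp add: A.anchored_def)
  qed
  moreover have "healthy_core X \<union> S \<subseteq> {v. v < n \<and> \<not> X' v}"
    using healthy_core_mono_step[OF X'] healthy_core_subset S_lt healed by blast
  ultimately show ?thesis by (intro absorbing_subset_healthy_core)
qed

lemma small_anchored_set_outside_healthy_core:
  assumes R: "n < 2^R" and v: "v < n" "X v"
  obtains S where "complement_walks.anchored n (Suc \<theta>) m (healthy_core X) S" "card S \<le> 2*R+2"
proof -
  interpret A: complement_walks n "Suc \<theta>" m "healthy_core X" by unfold_locales
  have "v \<in> A.U" using v healthy_core_subset by (auto simp: A.U_def)
  then have "A.U \<noteq> {}" by blast
  moreover have "3 \<le> Suc \<theta>" using threshold by simp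
  ultimately show ?thesis using A.small_anchored_set_exists R that by blast
qed

definition potential :: "(nat \<Rightarrow> bool) \<Rightarrow> ennreal" where
  "potential X = (if X = healthy then 0 else ennreal (2 ^ (n - card (healthy_core X))))"

lemma potential_le: "B \<subseteq> healthy_core X \<Longrightarrow> potential X \<le> ennreal (2 ^ (n - card B))"
proof -
  assume "B \<subseteq> healthy_core X"
  then have "card B \<le> card (healthy_core X)" by (rule card_mono[OF finite_healthy_core])
  then have "(2::real) ^ (n - card (healthy_core X)) \<le> 2 ^ (n - card B)" by (intro power_increasing) auto
  then show ?thesis by (simp add: potential_def ennreal_leI)
qed

lemma one_le_potential: "X \<noteq> healthy \<Longrightarrow> 1 \<le> potential X"
  by (simp add: potential_def)

lemma potential_le_two_power: "potential X \<le> ennreal (2^n)"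
  using potential_le[of "{}"] by simp

lemma potential_after_healing_le:
  assumes S: "complement_walks.anchored n (Suc \<theta>) m (healthy_core X) S"
    and X': "X' \<in> set_pmf (step X)" and healed: "\<forall>v\<in>S. \<not> X' v"
  shows "potential X' \<le> ennreal (2 ^ (n - card (healthy_core X) - 1))"
proof -
  interpret A: complement_walks n "Suc \<theta>" m "healthy_core X" by unfold_locales
  have S_out: "S \<subseteq> {..<n} - healthy_core X" "S \<noteq> {}"
    using A.anchored_subset[OF S] S by (auto simp: A.anchored_def)
  then have "1 \<le> card S" using finite_subset[of S "{..<n}"] by (auto simp: Suc_le_eq card_gt_0_iff)
  moreover have "card (healthy_core X \<union> S) = card (healthy_core X) + card S"
    using S_out finite_healthy_core by (intro card_Un_disjoint) (auto intro: finite_subset[of S "{..<n}"])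
  moreover have "potential X' \<le> ennreal (2 ^ (n - card (healthy_core X \<union> S)))"
    using healthy_core_Un_anchored_subset[OF S X' healed] by (rule potential_le)
  moreover have "(2::real) ^ (n - card (healthy_core X \<union> S)) \<le> 2 ^ (n - card (healthy_core X) - 1)"
    using calculation(1,2) by (intro power_increasing) auto
  ultimately show ?thesis by (meson ennreal_leI order_trans)
qed

text \<open>If some vertex is infected, the complement of the healthy core contains a small anchored
  set; with probability at least \<open>(1-p)\<^bsup>2R+2\<^esup>\<close> it heals and the potential halves.\<close>

lemma potential_step_contracts:
  assumes R: "n < 2^R"
  shows "(\<integral>\<^sup>+X'. potential X' \<partial>measure_pmf (step X)) \<le> ennreal (1 - (1-p)^(2*R+2)/2) * potential X"
proof (cases "\<forall>v<n. \<not> X v")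
  case True
  then show ?thesis by (simp add: cp_step_extinct potential_def)
next
  case False
  then obtain v where v: "v < n" "X v" by blast
  obtain S where S: "complement_walks.anchored n (Suc \<theta>) m (healthy_core X) S" "card S \<le> 2*R+2"
    using small_anchored_set_outside_healthy_core[of R v X] R v by metis
  define k where "k = n - card (healthy_core X)"
  have "healthy_core X \<subset> {..<n}" using healthy_core_subset v by auto
  then have "card (healthy_core X) < n" using psubset_card_mono[of "{..<n}" "healthy_core X"] by simp
  then have k: "1 \<le> k" unfolding k_def by simp
  define E where "E = {X'. \<forall>v\<in>S. \<not> X' v}"
  define \<alpha> where "\<alpha> = (1 - p) ^ (2*R+2)"
  have \<alpha>: "0 \<le> \<alpha>" "\<alpha> \<le> 1" unfolding \<alpha>_def using p_pos p_less_1 by (simp, intro power_le_one) auto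
  interpret A: complement_walks n "Suc \<theta>" m "healthy_core X" by unfold_locales
  have "S \<subseteq> {..<n}" using A.anchored_subset[OF S(1)] by blast
  then have "(1-p) ^ card S \<le> measure_pmf.prob (step X) E"
    unfolding E_def by (rule prob_cp_step_all_healthy)
  moreover have "\<alpha> \<le> (1-p) ^ card S" unfolding \<alpha>_def using S(2) p_pos p_less_1 by (intro power_decreasing) auto
  ultimately have P: "\<alpha> \<le> measure_pmf.prob (step X) E" by linarith
  have "potential X' \<le> ennreal (if X' \<in> E then 2^(k-1) else 2^k)" if X': "X' \<in> set_pmf (step X)" for X'
  proof (cases "X' \<in> E")
    case True
    then show ?thesis using potential_after_healing_le[OF S(1) X'] by (simp add: E_def k_def)
  next
    case False
    then show ?thesis using potential_le[OF healthy_core_mono_step[OF X']] by (simp add: k_def)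
  qed
  then have "(\<integral>\<^sup>+X'. potential X' \<partial>measure_pmf (step X)) \<le>
      ennreal (2^k - (2^k - 2^(k-1)) * measure_pmf.prob (step X) E)"
    by (rule nn_integral_pmf_le_by_event) auto
  also have "\<dots> \<le> ennreal ((1 - \<alpha>/2) * 2^k)"
  proof (rule ennreal_leI)
    have "(2::real)^k = 2 * 2^(k-1)" using k by (metis Suc_diff_le diff_Suc_1 power_Suc)
    then show "2^k - (2^k - 2^(k-1)) * measure_pmf.prob (step X) E \<le> (1 - \<alpha>/2) * 2^k"
      using P by (simp add: algebra_simps)
  qed
  also have "\<dots> = ennreal (1 - \<alpha>/2) * potential X"
    using \<alpha> v by (auto simp: potential_def ennreal_mult k_def healthy_def fun_eq_iff)
  finally show ?thesis unfolding \<alpha>_def .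
qed

lemma length_cp_traj: "xs \<in> set_pmf (traj X0 k) \<Longrightarrow> length xs = Suc k"
  by (induction k arbitrary: xs) auto

lemma cp_traj_extinct_Suc:
  "xs \<in> set_pmf (traj X0 k) \<Longrightarrow> t < k \<Longrightarrow> xs!t = healthy \<Longrightarrow> xs!Suc t = healthy"
proof (induction k arbitrary: xs)
  case (Suc k)
  then obtain ys y where ys: "ys \<in> set_pmf (traj X0 k)" "y \<in> set_pmf (step (last ys))" "xs = ys @ [y]"
    by auto
  have len: "length ys = Suc k" using ys(1) by (rule length_cp_traj)
  show ?case
  proof (cases "t < k")
    case True
    then show ?thesis using Suc.IH[OF ys(1) True] Suc.prems(3) len ys(3) by (simp add: nth_append)
  next
    case False
    then have t: "t = k" using Suc.prems(2) by simp
    moreover have "ys \<noteq> []" using len by auto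
    ultimately have "last ys = healthy" using Suc.prems(3) len ys(3) by (simp add: nth_append last_conv_nth)
    then have "y = healthy" using ys(2) cp_step_extinct[of healthy] by (simp add: healthy_def)
    then show ?thesis using t len ys(3) by (simp add: nth_append)
  qed
qed simp

lemma cp_traj_extinct_mono:
  assumes "xs \<in> set_pmf (traj X0 k)" "t \<le> t'" "t' \<le> k" "xs!t = healthy"
  shows "xs!t' = healthy"
  using assms(2-4)
proof (induction t' rule: dec_induct)
  case (step j)
  then show ?case using cp_traj_extinct_Suc[OF assms(1)] by simp
qed simp

lemma nn_integral_cp_traj_Suc_nth:
  assumes "j \<le> k"
  shows "(\<integral>\<^sup>+xs. f (xs!j) \<partial>measure_pmf (traj X0 (Suc k))) = (\<integral>\<^sup>+xs. f (xs!j) \<partial>measure_pmf (traj X0 k))"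
proof -
  have "(\<integral>\<^sup>+xs. f (xs!j) \<partial>measure_pmf (traj X0 (Suc k))) =
      (\<integral>\<^sup>+ys. (\<integral>\<^sup>+y. f ((ys @ [y])!j) \<partial>measure_pmf (step (last ys))) \<partial>measure_pmf (traj X0 k))"
    by simp
  also have "\<dots> = (\<integral>\<^sup>+ys. f (ys!j) \<partial>measure_pmf (traj X0 k))"
  proof (rule nn_integral_cong_AE)
    show "AE ys in measure_pmf (traj X0 k). (\<integral>\<^sup>+y. f ((ys @ [y])!j) \<partial>measure_pmf (step (last ys))) = f (ys!j)"
      unfolding AE_measure_pmf_iff using length_cp_traj assms by (auto simp: nth_append)
  qed
  finally show ?thesis .
qed

lemma nn_integral_cp_traj_nth:
  "j \<le> k \<Longrightarrow> (\<integral>\<^sup>+xs. f (xs!j) \<partial>measure_pmf (traj X0 k)) = (\<integral>\<^sup>+xs. f (xs!j) \<partial>measure_pmf (traj X0 j))"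
proof (induction k rule: dec_induct)
  case (step k)
  then show ?case by (simp only: nn_integral_cp_traj_Suc_nth[OF step.hyps(1)])
qed simp

lemma nn_integral_cp_traj_last:
  "(\<integral>\<^sup>+xs. f (xs!Suc k) \<partial>measure_pmf (traj X0 (Suc k))) =
     (\<integral>\<^sup>+ys. (\<integral>\<^sup>+y. f y \<partial>measure_pmf (step (ys!k))) \<partial>measure_pmf (traj X0 k))"
proof -
  have "(\<integral>\<^sup>+xs. f (xs!Suc k) \<partial>measure_pmf (traj X0 (Suc k))) =
      (\<integral>\<^sup>+ys. (\<integral>\<^sup>+y. f ((ys @ [y])!Suc k) \<partial>measure_pmf (step (last ys))) \<partial>measure_pmf (traj X0 k))"
    by simp
  also have "\<dots> = (\<integral>\<^sup>+ys. (\<integral>\<^sup>+y. f y \<partial>measure_pmf (step (ys!k))) \<partial>measure_pmf (traj X0 k))"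
  proof (rule nn_integral_cong_AE)
    show "AE ys in measure_pmf (traj X0 k).
        (\<integral>\<^sup>+y. f ((ys @ [y])!Suc k) \<partial>measure_pmf (step (last ys))) = (\<integral>\<^sup>+y. f y \<partial>measure_pmf (step (ys!k)))"
      unfolding AE_measure_pmf_iff
    proof
      fix ys assume "ys \<in> set_pmf (traj X0 k)"
      then have "length ys = Suc k" by (rule length_cp_traj)
      moreover from this have "last ys = ys!k" by (cases ys rule: rev_cases) (auto simp: nth_append)
      ultimately show "(\<integral>\<^sup>+y. f ((ys @ [y])!Suc k) \<partial>measure_pmf (step (last ys))) =
          (\<integral>\<^sup>+y. f y \<partial>measure_pmf (step (ys!k)))"
        by (simp add: nth_append)
    qed
  qed
  finally show ?thesis .
qed

lemma nn_integral_potential_cp_traj: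
  assumes R: "n < 2^R"
  shows "(\<integral>\<^sup>+xs. potential (xs!k) \<partial>measure_pmf (traj X0 k)) \<le> ennreal (1 - (1-p)^(2*R+2)/2) ^ k * potential X0"
proof (induction k)
  case (Suc k)
  define r where "r = ennreal (1 - (1-p)^(2*R+2)/2)"
  have "(\<integral>\<^sup>+xs. potential (xs!Suc k) \<partial>measure_pmf (traj X0 (Suc k))) \<le>
      (\<integral>\<^sup>+ys. r * potential (ys!k) \<partial>measure_pmf (traj X0 k))"
    unfolding nn_integral_cp_traj_last r_def
    by (intro nn_integral_mono potential_step_contracts[OF R])
  also have "\<dots> = r * (\<integral>\<^sup>+ys. potential (ys!k) \<partial>measure_pmf (traj X0 k))"
    by (rule nn_integral_cmult) simp
  also have "\<dots> \<le> r * (r ^ k * potential X0)"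
    using Suc.IH unfolding r_def by (intro mult_left_mono) auto
  finally show ?case unfolding r_def by (simp add: mult.assoc)
qed simp

lemma prob_cp_traj_alive:
  assumes R: "n < 2^R" and j: "j \<le> k"
  shows "measure_pmf.prob (traj X0 k) {xs. xs!j \<noteq> healthy} \<le> (1 - (1-p)^(2*R+2)/2) ^ j * 2^n"
proof -
  define r where "r = 1 - (1-p)^(2*R+2)/2"
  have r: "0 \<le> r"
  proof -
    have "(1-p)^(2*R+2) \<le> 1" using p_pos p_less_1 by (intro power_le_one) auto
    then show ?thesis unfolding r_def by simp
  qed
  have "ennreal (measure_pmf.prob (traj X0 k) {xs. xs!j \<noteq> healthy}) =
      (\<integral>\<^sup>+xs. indicator {xs. xs!j \<noteq> healthy} xs \<partial>measure_pmf (traj X0 k))"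
    by (simp add: measure_pmf.emeasure_eq_measure)
  also have "\<dots> \<le> (\<integral>\<^sup>+xs. potential (xs!j) \<partial>measure_pmf (traj X0 k))"
    by (intro nn_integral_mono) (auto simp: indicator_def one_le_potential)
  also have "\<dots> = (\<integral>\<^sup>+xs. potential (xs!j) \<partial>measure_pmf (traj X0 j))"
    by (rule nn_integral_cp_traj_nth[OF j])
  also have "\<dots> \<le> ennreal r ^ j * potential X0"
    unfolding r_def by (rule nn_integral_potential_cp_traj[OF R])
  also have "\<dots> \<le> ennreal r ^ j * ennreal (2^n)" by (intro mult_left_mono potential_le_two_power) auto
  also have "\<dots> = ennreal (r ^ j * 2^n)" using r by (simp add: ennreal_mult ennreal_power)
  finally show ?thesis using r unfolding r_def by (simp add: ennreal_le_iff)
qed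

lemma survive_prob_le:
  assumes R: "n < 2^R"
  shows "survive_prob n (Suc \<theta>) m \<theta> p C k \<le> (1 - (1-p)^(2*R+2)/2) ^ nat \<lceil>real n powr C\<rceil> * 2^n"
proof -
  define T where "T = nat \<lceil>real n powr C\<rceil>"
  define Ev where "Ev = {xs. \<exists>t \<le> k. real n powr C \<le> real t \<and> xs ! t \<noteq> healthy}"
  have tT: "T \<le> t" if "real n powr C \<le> real t" for t
    using that unfolding T_def by (simp add: nat_le_iff ceiling_le_iff)
  have sp: "survive_prob n (Suc \<theta>) m \<theta> p C k = measure_pmf.prob (traj (all_infected n) k) Ev"
    unfolding survive_prob_def Ev_def by simp
  show ?thesis
  proof (cases "T \<le> k")
    case False
    then have "Ev = {}" unfolding Ev_def using tT by fastforce
    moreover have "(1-p)^(2*R+2) \<le> 1" using p_pos p_less_1 by (intro power_le_one) auto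
    ultimately show ?thesis using sp unfolding T_def[symmetric] by simp
  next
    case True
    have "Ev \<inter> set_pmf (traj (all_infected n) k) \<subseteq> {xs. xs ! T \<noteq> healthy}"
      using cp_traj_extinct_mono tT unfolding Ev_def by blast
    then have "measure_pmf.prob (traj (all_infected n) k) Ev \<le>
        measure_pmf.prob (traj (all_infected n) k) {xs. xs ! T \<noteq> healthy}"
      by (subst measure_Int_set_pmf[symmetric]) (intro measure_pmf.finite_measure_mono, auto)
    also have "\<dots> \<le> (1 - (1-p)^(2*R+2)/2) ^ T * 2^n" by (rule prob_cp_traj_alive[OF R True])
    finally show ?thesis using sp unfolding T_def by simp
  qed
qed

end

section \<open>Random regular multigraphs\<close>

lemma finite_matchings: "finite (matchings n d)"
proof -
  let ?N = "d * n"
  let ?extend = "\<lambda>g h. if h < ?N then g h else h"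
  let ?G = "{g. \<forall>h. (h \<in> {..<?N} \<longrightarrow> g h \<in> {..<?N}) \<and> (h \<notin> {..<?N} \<longrightarrow> g h = 0)}"
  have "matchings n d \<subseteq> ?extend ` ?G"
  proof
    fix f assume f: "f \<in> matchings n d"
    then have "f = ?extend (\<lambda>h. if h < ?N then f h else 0)" by (auto simp: matchings_def)
    moreover have "(\<lambda>h. if h < ?N then f h else 0) \<in> ?G" using f by (auto simp: matchings_def)
    ultimately show "f \<in> ?extend ` ?G" by (rule image_eqI)
  qed
  then show ?thesis
    using finite_surj[OF finite_set_of_finite_funs[OF finite_lessThan finite_lessThan]] by blast
qed

lemma matchings_nonempty:
  assumes "even (d * n)"
  shows "matchings n d \<noteq> {}"
proof -
  define m0 where "m0 = (\<lambda>h::nat. if h < d * n then (if even h then h + 1 else h - 1) else h)"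
  have "m0 \<in> matchings n d" unfolding matchings_def
  proof (intro CollectI conjI allI impI)
    fix h assume h: "h < d * n"
    have "even h \<Longrightarrow> h + 1 < d * n" using h assms by (metis Suc_eq_plus1 Suc_lessI even_Suc)
    moreover have "odd h \<Longrightarrow> 0 < h" by (rule ccontr) simp
    ultimately show "m0 h < d * n" "m0 h \<noteq> h" "m0 (m0 h) = h" using h by (auto simp: m0_def)
  qed (simp add: m0_def)
  then show ?thesis by blast
qed

lemma prob_config_model_eq_0:
  assumes "even (d * n)" "\<And>m. m \<in> matchings n d \<Longrightarrow> m \<notin> A"
  shows "measure_pmf.prob (config_model n d) A = 0"
proof -
  have "set_pmf (config_model n d) = matchings n d"
    unfolding config_model_def using finite_matchings matchings_nonempty[OF assms(1)] by simp
  then show ?thesis using assms(2) by (auto simp: measure_pmf_zero_iff)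
qed

lemma survive_prob_le_exp:
  fixes p :: real and \<theta> :: nat
  assumes p: "0 < p" "p < 1" and \<theta>: "2 \<le> \<theta>" and n: "1 \<le> n" and m: "m \<in> matchings n (\<theta>+1)"
  shows "survive_prob n (\<theta>+1) m \<theta> p (2 - 2 * ln (1-p) / ln 2) k \<le> 2^n * exp (-((1-p)^6/2) * real n^2)"
proof -
  interpret threshold_contact n \<theta> m p
    using m \<theta> p by unfold_locales simp_all
  have "survive_prob n (Suc \<theta>) m \<theta> p (2 - 2 * ln (1-p) / ln 2) k \<le>
      (1 - (1-p)^(2*(nat \<lceil>log 2 n\<rceil> + 1)+2)/2) ^ nat \<lceil>real n powr (2 - 2 * ln (1-p) / ln 2)\<rceil> * 2^n"
    by (rule survive_prob_le[OF less_two_power_ceiling_log[OF n]])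
  also have "\<dots> \<le> exp (-((1-p)^6/2) * real n^2) * 2^n"
    using p by (intro mult_right_mono contraction_power_le_exp n) auto
  finally show ?thesis by (simp add: mult.commute)
qed

lemma prob_config_model_survival_less:
  fixes p \<epsilon> :: real and \<theta> :: nat
  assumes p: "0 < p" "p < 1" and \<theta>: "2 \<le> \<theta>" and \<epsilon>: "0 < \<epsilon>" and n: "1 \<le> n"
    and small: "2^n * exp (-((1-p)^6/2) * real n^2) < \<epsilon>"
  shows "even ((\<theta>+1) * n) \<longrightarrow> measure_pmf.prob (config_model n (\<theta>+1))
           {m. (SUP k. survive_prob n (\<theta>+1) m \<theta> p (2 - 2 * ln (1-p) / ln 2) k) > \<epsilon>} < \<epsilon>"
proof
  assume even: "even ((\<theta>+1) * n)"
  have "measure_pmf.prob (config_model n (\<theta>+1))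
      {m. (SUP k. survive_prob n (\<theta>+1) m \<theta> p (2 - 2 * ln (1-p) / ln 2) k) > \<epsilon>} = 0"
  proof (rule prob_config_model_eq_0[OF even])
    fix m assume "m \<in> matchings n (\<theta>+1)"
    then have "(SUP k. survive_prob n (\<theta>+1) m \<theta> p (2 - 2 * ln (1-p) / ln 2) k) < \<epsilon>"
      using survive_prob_le_exp[OF p \<theta> n] small by (intro le_less_trans[OF cSUP_least]) auto
    then show "m \<notin> {m. (SUP k. survive_prob n (\<theta>+1) m \<theta> p (2 - 2 * ln (1-p) / ln 2) k) > \<epsilon>}"
      by simp
  qed
  then show "measure_pmf.prob (config_model n (\<theta>+1))
      {m. (SUP k. survive_prob n (\<theta>+1) m \<theta> p (2 - 2 * ln (1-p) / ln 2) k) > \<epsilon>} < \<epsilon>"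
    using \<epsilon> by simp
qed

theorem theorem2:
  fixes p :: real and \<theta> :: nat
  assumes "0 < p" "p < 1" "2 \<le> \<theta>"
  shows "\<exists>C > 0. \<forall>\<epsilon> > 0. \<forall>\<^sub>F n in sequentially. even ((\<theta>+1) * n) \<longrightarrow>
           measure_pmf.prob (config_model n (\<theta>+1))
             {m. (SUP k. survive_prob n (\<theta>+1) m \<theta> p C k) > \<epsilon>} < \<epsilon>"
proof (intro exI[of _ "2 - 2 * ln (1-p) / ln 2"] conjI allI impI)
  have "2 * ln (1-p) / ln 2 < 0" using assms by (intro divide_neg_pos) auto
  then show "0 < 2 - 2 * ln (1-p) / ln 2" by simp
  fix \<epsilon> :: real assume \<epsilon>: "0 < \<epsilon>"
  have "(\<lambda>n::nat. 2^n * exp (-((1-p)^6/2) * real n^2)) \<longlonglongrightarrow> 0"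
    using assms by real_asymp
  then have "\<forall>\<^sub>F n in sequentially. 2^n * exp (-((1-p)^6/2) * real n^2) < \<epsilon> \<and> 1 \<le> n"
    using \<epsilon> by (intro eventually_conj order_tendstoD(2) eventually_ge_at_top)
  then show "\<forall>\<^sub>F n in sequentially. even ((\<theta>+1) * n) \<longrightarrow>
      measure_pmf.prob (config_model n (\<theta>+1))
        {m. (SUP k. survive_prob n (\<theta>+1) m \<theta> p (2 - 2 * ln (1-p) / ln 2) k) > \<epsilon>} < \<epsilon>"
    by (rule eventually_mono) (elim conjE, rule prob_config_model_survival_less[OF assms \<epsilon>])
qed

end
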